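(* Let $\lambda=(\lambda_1,\dots,\lambda_n)\in\mathbb Z^n$ with $\lambda_1>\lambda_2>\cdots>\lambda_n$ (all entries distinct and decreasing). Write the Schur $P$-Laurent polynomial as $P_\lambda=\sum_\mu g_{\mu\lambda}s_\mu$, the sum over generalized partitions $\mu$ of length $n$. Then $g_{0\lambda}=1$ if $\lambda=2\rho$, and $g_{0\lambda}=0$ otherwise, where $2\rho=(n-1,n-3,\dots,-(n-1))$, i.e. $(2\rho)_i=n-2i+1$.
   Context: A generalized partition of length $n$ is $\mu=(\mu_1\ge\cdots\ge\mu_n)\in\mathbb Z^n$; its Schur Laurent polynomial is $s_\mu=\sum_{w\in\mathfrak S_n}w\bigl(x_1^{\mu_1+n-1}x_2^{\mu_2+n-2}\cdots x_n^{\mu_n}\prod_{i<j}(x_i-x_j)^{-1}\bigr)$, where $\mathfrak S_n$ permutes the variables; these form a basis of the symmetric Laurent polynomials in $x_1,\dots,x_n$, and $s_0=1$. For $\lambda\in\mathbb Z^n$ with strictly decreasing entries, $P_\lambda=\sum_{w\in\mathfrak S_n}w\bigl(x_1^{\lambda_1}\cdots x_n^{\lambda_n}\prod_{i<j}\frac{x_i+x_j}{x_i-x_j}\bigr)$. *)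

theory Defs
  imports Complex_Main "HOL-Combinatorics.Permutations"
begin

text \<open>Laurent polynomials in x_0,...,x_{n-1} are represented by their values on the
  Zariski-dense set of points with nonzero, pairwise distinct complex coordinates.
  Index vectors (lambda, mu) are int lists of length n, 0-indexed.\<close>

definition good_point :: "nat \<Rightarrow> (nat \<Rightarrow> complex) \<Rightarrow> bool" where
  "good_point n x \<longleftrightarrow> (\<forall>i<n. x i \<noteq> 0) \<and> (\<forall>i<n. \<forall>j<n. i \<noteq> j \<longrightarrow> x i \<noteq> x j)"

definition gen_partition :: "nat \<Rightarrow> int list \<Rightarrow> bool" where
  "gen_partition n mu \<longleftrightarrow> length mu = n \<and> sorted_wrt (\<ge>) mu"

definition strict_decr :: "nat \<Rightarrow> int list \<Rightarrow> bool" where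
  "strict_decr n lam \<longleftrightarrow> length lam = n \<and> sorted_wrt (>) lam"

definition schur_s :: "nat \<Rightarrow> int list \<Rightarrow> (nat \<Rightarrow> complex) \<Rightarrow> complex" where
  "schur_s n mu x = (\<Sum>w | w permutes {..<n}.
     (\<Prod>i<n. x (w i) powi (mu ! i + int n - 1 - int i)) /
     (\<Prod>i<n. \<Prod>j\<in>{i<..<n}. (x (w i) - x (w j))))"

definition schur_P :: "nat \<Rightarrow> int list \<Rightarrow> (nat \<Rightarrow> complex) \<Rightarrow> complex" where
  "schur_P n lam x = (\<Sum>w | w permutes {..<n}.
     (\<Prod>i<n. x (w i) powi (lam ! i)) *
     (\<Prod>i<n. \<Prod>j\<in>{i<..<n}. (x (w i) + x (w j)) / (x (w i) - x (w j))))"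

definition two_rho :: "nat \<Rightarrow> int list" where
  "two_rho n = map (\<lambda>i. int n - 2 * int i - 1) [0..<n]"

definition is_schur_expansion :: "nat \<Rightarrow> int list \<Rightarrow> (int list \<Rightarrow> complex) \<Rightarrow> bool" where
  "is_schur_expansion n lam g \<longleftrightarrow>
     finite {mu. g mu \<noteq> 0} \<and> (\<forall>mu. g mu \<noteq> 0 \<longrightarrow> gen_partition n mu) \<and>
     (\<forall>x. good_point n x \<longrightarrow> schur_P n lam x = (\<Sum>mu | g mu \<noteq> 0. g mu * schur_s n mu x))"

end

theory Submission
  imports Defs "Jordan_Normal_Form.Determinant"
begin

text \<open>Multiplying by the Vandermonde product a_delta = prod_{i<j} (x_i - x_j) turns s_mu into the
  alternant a_(mu + delta) and P_lambda into prod_{i<j} (x_i + x_j) * a_lambda. Expanding the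
  product of the x_i + x_j into monomials and sorting exponents writes each resulting alternant
  as +-a_(mu + delta) or 0, which gives the expansion.

  For the coefficient of s_0, multiply the expansion by a_delta * a_(0, -1, ..., 1 - n) and take
  constant terms. For strictly decreasing exponent vectors b and c, the constant term of
  a_b * a_c is +-n! if b_i + c_(n-1-i) = 0 for all i, and 0 otherwise. On the Schur side this
  singles out mu = 0. On the other side prod_{i<j} (x_i + x_j) * a_(0, ..., 1 - n) = a_(2 rho), so
  the product is a_lambda * a_(2 rho); since 2 rho reverses to its negative, its constant term is
  nonzero exactly when lambda = 2 rho.\<close>

section \<open>Vandermonde products\<close>

definition vandermonde :: "nat \<Rightarrow> (nat \<Rightarrow> 'a::comm_ring_1) \<Rightarrow> 'a" where
  "vandermonde n x = (\<Prod>i<n. \<Prod>j\<in>{i<..<n}. x i - x j)"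

lemma vandermonde_Suc: "vandermonde (Suc n) x = vandermonde n x * (\<Prod>i<n. x i - x n)"
proof -
  have "{i<..<Suc n} = insert n {i<..<n}" if "i < n" for i
    using that by auto
  moreover have "{n<..<Suc n} = {}" by auto
  ultimately show ?thesis
    by (simp add: vandermonde_def lessThan_Suc prod.distrib mult.commute)
qed

lemma det_scale_rows:
  "det (mat n n (\<lambda>(i,j). d i * f i j)) = (\<Prod>i<n. d i) * det (mat n n (\<lambda>(i,j). f i j))"
proof -
  have "det (mat n n (\<lambda>(i,j). d i * f i j)) =
     (\<Sum>p\<in>{p. p permutes {0..<n}}. signof p * (\<Prod>i = 0..<n. d i * f i (p i)))"
    by (subst det_def'[of _ n]) (auto intro!: sum.cong prod.cong simp: permutes_in_image)
  also have "\<dots> = (\<Sum>p\<in>{p. p permutes {0..<n}}. (\<Prod>i<n. d i) * (signof p * (\<Prod>i = 0..<n. f i (p i))))"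
    by (auto intro!: sum.cong simp: prod.distrib atLeast0LessThan)
  also have "\<dots> = (\<Prod>i<n. d i) * det (mat n n (\<lambda>(i,j). f i j))"
    by (subst det_def'[of _ n]) (auto intro!: sum.cong prod.cong simp: permutes_in_image sum_distrib_left)
  finally show ?thesis .
qed

lemma det_unit_lower_bidiagonal:
  "det (mat n n (\<lambda>(i,j). if i = j then 1 else if i = Suc j then c else 0)) = (1 :: 'a::comm_ring_1)"
proof -
  let ?U = "mat n n (\<lambda>(i,j). if i = j then 1 else if i = Suc j then c else (0 :: 'a))"
  have "det ?U = prod_list (diag_mat ?U)"
    by (rule det_lower_triangular[of n]) auto
  also have "diag_mat ?U = map (\<lambda>i. 1) [0..<n]"
    by (auto simp: diag_mat_def)
  finally show ?thesis by (simp add: map_replicate_const)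
qed

lemma det_vandermonde:
  fixes x :: "nat \<Rightarrow> 'a::comm_ring_1"
  shows "det (mat n n (\<lambda>(i,j). x i ^ (n - 1 - j))) = vandermonde n x"
proof (induction n)
  case 0
  show ?case by (simp add: vandermonde_def det_def)
next
  case (Suc n)
  define A :: "'a mat" where "A = mat (Suc n) (Suc n) (\<lambda>(i,j). x i ^ (n - j))"
  \<comment> \<open>right multiplication by U subtracts x n times column j + 1 from column j\<close>
  define U :: "'a mat" where
    "U = mat (Suc n) (Suc n) (\<lambda>(i,j). if i = j then 1 else if i = Suc j then - x n else 0)"
  have A: "A \<in> carrier_mat (Suc n) (Suc n)" and U: "U \<in> carrier_mat (Suc n) (Suc n)"
    by (simp_all add: A_def U_def)
  have det_U: "det U = 1" unfolding U_def by (rule det_unit_lower_bidiagonal)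
  define B where "B = A * U"
  have B: "B \<in> carrier_mat (Suc n) (Suc n)" using A U by (simp add: B_def)
  have B_entry: "B $$ (i,j) = (if j = n then 1 else x i ^ (n - 1 - j) * (x i - x n))"
    if i: "i < Suc n" and j: "j < Suc n" for i j
  proof -
    have "B $$ (i,j) = (\<Sum>k\<in>{0..<Suc n}. (if k = j then A $$ (i,k) else 0) +
                       (if k = Suc j then - x n * A $$ (i,k) else 0))"
      using A U i j by (auto simp: B_def scalar_prod_def U_def intro!: sum.cong)
    also have "\<dots> = A $$ (i,j) + (if Suc j < Suc n then - x n * A $$ (i, Suc j) else 0)"
      using j by (cases "j = n") (auto simp: sum.distrib)
    also have "\<dots> = (if j = n then 1 else x i ^ (n - 1 - j) * (x i - x n))"
    proof (cases "j = n")
      case False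
      hence "n - j = Suc (n - 1 - j)" using j by auto
      thus ?thesis using False i j by (simp add: A_def algebra_simps)
    qed (use i in \<open>simp add: A_def\<close>)
    finally show ?thesis .
  qed
  have "det A = det B" using det_mult[OF A U] det_U by (simp add: B_def)
  also have "\<dots> = (\<Sum>j<Suc n. B $$ (n,j) * cofactor B n j)"
    by (rule laplace_expansion_row[OF B]) simp
  also have "\<dots> = cofactor B n n"
    by (simp add: B_entry lessThan_Suc)
  also have "\<dots> = det (mat_delete B n n)"
    by (simp add: cofactor_def)
  also have "mat_delete B n n = mat n n (\<lambda>(i,j). (x i - x n) * x i ^ (n - 1 - j))"
    using B by (auto simp: mat_delete_def B_entry)
  also have "det \<dots> = (\<Prod>i<n. x i - x n) * vandermonde n x"
    using det_scale_rows[of n "\<lambda>i. x i - x n" "\<lambda>i j. x i ^ (n - 1 - j)"] Suc.IH by simp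
  finally show ?case by (simp add: A_def vandermonde_Suc mult.commute)
qed

lemma vandermonde_permute:
  assumes w: "w permutes {..<n}"
  shows "vandermonde n (x \<circ> w) = of_int (sign w) * vandermonde n x"
proof -
  define V where "V = mat n n (\<lambda>(i,j). x i ^ (n - 1 - j))"
  have V: "V \<in> carrier_mat n n" by (simp add: V_def)
  have "mat n n (\<lambda>(i,j). V $$ (w i, j)) = mat n n (\<lambda>(i,j). (x \<circ> w) i ^ (n - 1 - j))"
    using permutes_in_image[OF w] by (intro eq_matI) (auto simp: V_def)
  hence "vandermonde n (x \<circ> w) = det (mat n n (\<lambda>(i,j). V $$ (w i, j)))"
    by (metis det_vandermonde)
  also have "\<dots> = signof w * det V"
    using w by (intro det_permute_rows[OF V]) (simp add: atLeast0LessThan)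
  finally show ?thesis unfolding V_def det_vandermonde .
qed

lemma vandermonde_nonzero:
  fixes x :: "nat \<Rightarrow> 'a::idom"
  assumes "inj_on x {..<n}"
  shows "vandermonde n x \<noteq> 0"
  using assms by (auto simp: vandermonde_def inj_on_def) (metis lessThan_iff less_trans nat_neq_iff)

section \<open>Alternants\<close>

definition perm_monomial :: "nat \<Rightarrow> (nat \<Rightarrow> 'a::field) \<Rightarrow> (nat \<Rightarrow> int) \<Rightarrow> (nat \<Rightarrow> nat) \<Rightarrow> 'a" where
  "perm_monomial n x b w = (\<Prod>i<n. x (w i) powi b i)"

definition alternant :: "nat \<Rightarrow> (nat \<Rightarrow> int) \<Rightarrow> (nat \<Rightarrow> 'a::field) \<Rightarrow> 'a" where
  "alternant n b x = (\<Sum>w | w permutes {..<n}. of_int (sign w) * perm_monomial n x b w)"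

definition staircase :: "nat \<Rightarrow> nat \<Rightarrow> int" where
  "staircase n i = int n - 1 - int i"

lemma alternant_cong: "(\<And>i. i < n \<Longrightarrow> b i = b' i) \<Longrightarrow> alternant n b x = alternant n b' x"
  unfolding alternant_def perm_monomial_def
  by (intro sum.cong refl arg_cong2[where f="(*)"] prod.cong) auto

lemma alternant_staircase: "alternant n (staircase n) x = vandermonde n x"
proof -
  define V where "V = mat n n (\<lambda>(i,j). x i ^ (n - 1 - j))"
  have V: "V \<in> carrier_mat n n" by (simp add: V_def)
  have entry: "transpose_mat V $$ (i, p i) = x (p i) powi staircase n i"
    if p: "p permutes {..<n}" and i: "i < n" for p i
  proof -
    have "staircase n i = int (n - 1 - i)" using i by (simp add: staircase_def)
    hence "x (p i) powi staircase n i = x (p i) ^ (n - 1 - i)" by (simp only: power_int_of_nat)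
    thus ?thesis using i permutes_in_image[OF p] V by (simp add: V_def)
  qed
  have "vandermonde n x = det V"
    by (simp only: V_def det_vandermonde)
  also have "\<dots> = det (transpose_mat V)"
    by (rule det_transpose[OF V, symmetric])
  also have "\<dots> = (\<Sum>p\<in>{p. p permutes {0..<n}}. signof p * (\<Prod>i = 0..<n. transpose_mat V $$ (i, p i)))"
    using V by (intro det_def') simp
  also have "\<dots> = alternant n (staircase n) x"
    unfolding alternant_def perm_monomial_def atLeast0LessThan
    by (intro sum.cong refl arg_cong2[where f="(*)"] prod.cong) (auto simp: entry)
  finally show ?thesis by simp
qed

lemma alternant_permute_exponents:
  assumes s: "s permutes {..<n}"
  shows "alternant n (b \<circ> s) x = of_int (sign s) * alternant n b x"
proof -
  let ?P = "{w. w permutes {..<n}}"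
  have monomial: "perm_monomial n x (b \<circ> s) w = perm_monomial n x b (w \<circ> inv_into UNIV s)" for w
  proof -
    have "perm_monomial n x (b \<circ> s) w = (\<Prod>k<n. x (w (inv_into UNIV s k)) powi b (s (inv_into UNIV s k)))"
      unfolding perm_monomial_def by (subst prod.permute[OF permutes_inv[OF s]]) (simp add: o_def)
    thus ?thesis by (simp add: perm_monomial_def permutes_inverses(1)[OF s])
  qed
  have "alternant n (b \<circ> s) x = (\<Sum>w\<in>?P. of_int (sign w) * perm_monomial n x b (w \<circ> inv_into UNIV s))"
    by (simp add: alternant_def monomial)
  also have "\<dots> = (\<Sum>w\<in>?P. of_int (sign (w \<circ> s)) * perm_monomial n x b (w \<circ> s \<circ> inv_into UNIV s))"
    by (rule sum_permutations_compose_right[OF s])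
  also have "\<dots> = (\<Sum>w\<in>?P. of_int (sign s) * (of_int (sign w) * perm_monomial n x b w))"
  proof (rule sum.cong[OF refl])
    fix w assume "w \<in> ?P"
    hence "permutation w" "permutation s" using s permutation_permutes by blast+
    moreover have "w \<circ> s \<circ> inv_into UNIV s = w"
      using permutes_inverses(1)[OF s] by (auto simp: fun_eq_iff)
    ultimately show "of_int (sign (w \<circ> s)) * perm_monomial n x b (w \<circ> s \<circ> inv_into UNIV s) =
        of_int (sign s) * (of_int (sign w) * perm_monomial n x b w)"
      by (simp add: sign_compose)
  qed
  also have "\<dots> = of_int (sign s) * alternant n b x" by (simp add: alternant_def sum_distrib_left)
  finally show ?thesis .
qed

lemma perm_monomial_mult:
  assumes w: "w permutes {..<n}" and v: "v permutes {..<n}" and x: "\<And>i. i < n \<Longrightarrow> x i \<noteq> 0"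
  shows "perm_monomial n x b w * perm_monomial n x c v = perm_monomial n x (\<lambda>i. b i + c (inv_into UNIV v (w i))) w"
proof -
  have p: "inv_into UNIV v \<circ> w permutes {..<n}" by (rule permutes_compose[OF w permutes_inv[OF v]])
  have "perm_monomial n x c v = (\<Prod>k<n. x (v ((inv_into UNIV v \<circ> w) k)) powi c ((inv_into UNIV v \<circ> w) k))"
    unfolding perm_monomial_def by (subst prod.permute[OF p]) (simp add: o_def)
  also have "\<dots> = (\<Prod>k<n. x (w k) powi c (inv_into UNIV v (w k)))"
    by (simp add: permutes_inverses(1)[OF v])
  finally show ?thesis
    using permutes_in_image[OF w] x
    by (simp add: perm_monomial_def prod.distrib[symmetric] power_int_add)
qed

lemma perm_monomial_reindex_id:
  assumes w: "w permutes {..<n}"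
  shows "perm_monomial n x b w = perm_monomial n x (b \<circ> inv_into UNIV w) id"
proof -
  have "perm_monomial n x (b \<circ> inv_into UNIV w) id = (\<Prod>i<n. x (w i) powi b (inv_into UNIV w (w i)))"
    unfolding perm_monomial_def by (subst prod.permute[OF w]) (simp add: o_def)
  thus ?thesis by (simp add: perm_monomial_def permutes_inverses(2)[OF w])
qed

lemma alternant_shift:
  assumes x: "\<And>i. i < n \<Longrightarrow> x i \<noteq> 0"
  shows "alternant n (\<lambda>i. b i + t) x = alternant n b x * (\<Prod>k<n. x k powi t)"
proof -
  have "perm_monomial n x (\<lambda>i. b i + t) w = perm_monomial n x b w * (\<Prod>k<n. x k powi t)"
    if w: "w permutes {..<n}" for w
  proof -
    have "(\<Prod>k<n. x k powi t) = (\<Prod>i<n. x (w i) powi t)"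
      by (subst prod.permute[OF w]) (simp add: o_def)
    thus ?thesis using permutes_in_image[OF w] x
      by (simp add: perm_monomial_def prod.distrib[symmetric] power_int_add)
  qed
  thus ?thesis by (simp add: alternant_def sum_distrib_right mult.assoc)
qed

lemma alternant_double: "alternant n (\<lambda>i. 2 * b i) x = alternant n b (\<lambda>i. x i ^ 2)"
  by (simp add: alternant_def perm_monomial_def power_int_power)

definition pair_sum_prod :: "nat \<Rightarrow> (nat \<Rightarrow> 'a::comm_ring_1) \<Rightarrow> 'a" where
  "pair_sum_prod n x = (\<Prod>i<n. \<Prod>j\<in>{i<..<n}. x i + x j)"

lemma pair_sum_prod_mult_vandermonde:
  "pair_sum_prod n x * vandermonde n x = vandermonde n (\<lambda>i. x i ^ 2)"
  unfolding pair_sum_prod_def vandermonde_def prod.distrib[symmetric]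
  by (intro prod.cong refl) (simp add: power2_eq_square algebra_simps)

lemma pair_sum_prod_permute:
  fixes x :: "nat \<Rightarrow> 'a::idom"
  assumes x: "inj_on x {..<n}" and w: "w permutes {..<n}"
  shows "pair_sum_prod n (x \<circ> w) = pair_sum_prod n x"
proof -
  have "pair_sum_prod n (x \<circ> w) * (of_int (sign w) * vandermonde n x) =
        pair_sum_prod n (x \<circ> w) * vandermonde n (x \<circ> w)"
    by (simp only: vandermonde_permute[OF w])
  also have "\<dots> = vandermonde n ((\<lambda>i. x i ^ 2) \<circ> w)"
    by (simp only: pair_sum_prod_mult_vandermonde) (simp add: o_def)
  also have "\<dots> = pair_sum_prod n x * (of_int (sign w) * vandermonde n x)"
    by (simp add: vandermonde_permute[OF w] flip: pair_sum_prod_mult_vandermonde)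
  finally show ?thesis using vandermonde_nonzero[OF x] by (simp add: sign_def split: if_splits)
qed

lemma divide_of_int_sign_mult:
  fixes a b :: "'a::field"
  shows "a / (of_int (sign w) * b) = of_int (sign w) * a / b"
  by (cases "evenperm w") (simp_all add: sign_def)

lemma good_point_nonzero: "good_point n x \<Longrightarrow> i < n \<Longrightarrow> x i \<noteq> 0"
  by (simp add: good_point_def)

lemma good_point_inj_on: "good_point n x \<Longrightarrow> inj_on x {..<n}"
  by (auto simp: good_point_def inj_on_def)

lemma schur_s_eq_alternant:
  assumes x: "good_point n x"
  shows "schur_s n mu x = alternant n (\<lambda>i. mu ! i + staircase n i) x / vandermonde n x"
proof -
  have "(\<Prod>i<n. x (w i) powi (mu ! i + int n - 1 - int i)) / (\<Prod>i<n. \<Prod>j\<in>{i<..<n}. x (w i) - x (w j))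
      = of_int (sign w) * perm_monomial n x (\<lambda>i. mu ! i + staircase n i) w / vandermonde n x"
    if w: "w permutes {..<n}" for w
  proof -
    have "(\<Prod>i<n. \<Prod>j\<in>{i<..<n}. x (w i) - x (w j)) = of_int (sign w) * vandermonde n x"
      using vandermonde_permute[OF w, of x] by (simp add: vandermonde_def)
    thus ?thesis by (simp add: divide_of_int_sign_mult perm_monomial_def staircase_def algebra_simps)
  qed
  thus ?thesis by (simp add: schur_s_def alternant_def sum_divide_distrib)
qed

lemma schur_P_eq_alternant:
  assumes x: "good_point n x"
  shows "schur_P n lam x = pair_sum_prod n x / vandermonde n x * alternant n (\<lambda>i. lam ! i) x"
proof -
  have "(\<Prod>i<n. x (w i) powi lam ! i) * (\<Prod>i<n. \<Prod>j\<in>{i<..<n}. (x (w i) + x (w j)) / (x (w i) - x (w j)))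
      = pair_sum_prod n x / vandermonde n x * (of_int (sign w) * perm_monomial n x (\<lambda>i. lam ! i) w)"
    if w: "w permutes {..<n}" for w
  proof -
    have "(\<Prod>i<n. \<Prod>j\<in>{i<..<n}. (x (w i) + x (w j)) / (x (w i) - x (w j)))
        = pair_sum_prod n (x \<circ> w) / vandermonde n (x \<circ> w)"
      by (simp add: pair_sum_prod_def vandermonde_def prod_dividef)
    also have "\<dots> = pair_sum_prod n x / (of_int (sign w) * vandermonde n x)"
      by (simp add: vandermonde_permute[OF w] pair_sum_prod_permute[OF good_point_inj_on[OF x] w])
    finally show ?thesis by (simp add: divide_of_int_sign_mult perm_monomial_def)
  qed
  thus ?thesis by (simp add: schur_P_def alternant_def sum_distrib_left)
qed

section \<open>Constant terms\<close>

text \<open>Laurent polynomials are only available through their values, so constant terms are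
  computed by averaging over the points with coordinates (i + 1) z^(k i), where z is a primitive
  M-th root of unity; this picks out the constant term as long as all exponents lie strictly
  between -M and M. The moduli i + 1 keep the coordinates distinct.\<close>

definition sample_point :: "nat \<Rightarrow> (nat \<Rightarrow> nat) \<Rightarrow> nat \<Rightarrow> complex" where
  "sample_point M k i = of_nat (Suc i) * cis (2 * pi / real M) ^ k i"

definition const_term :: "nat \<Rightarrow> nat \<Rightarrow> ((nat \<Rightarrow> complex) \<Rightarrow> complex) \<Rightarrow> complex" where
  "const_term n M F = (\<Sum>k\<in>PiE {..<n} (\<lambda>_. {..<M}). F (sample_point M k)) / of_nat M ^ n"

lemma good_point_sample_point: "good_point n (sample_point M k)"
proof -
  have norm: "norm (sample_point M k i) = real (Suc i)" for i
    by (simp add: sample_point_def norm_mult norm_power del: of_nat_Suc)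
  show ?thesis unfolding good_point_def
  proof (intro conjI allI impI)
    show "sample_point M k i \<noteq> 0" for i
      using norm[of i] by auto
    show "sample_point M k i \<noteq> sample_point M k j" if "i \<noteq> j" for i j
      using norm[of i] norm[of j] that by auto
  qed
qed

lemma const_term_cong:
  "(\<And>x. good_point n x \<Longrightarrow> F x = G x) \<Longrightarrow> const_term n M F = const_term n M G"
  unfolding const_term_def using good_point_sample_point by simp

lemma const_term_sum:
  "finite A \<Longrightarrow> const_term n M (\<lambda>x. \<Sum>a\<in>A. f a x) = (\<Sum>a\<in>A. const_term n M (f a))"
  unfolding const_term_def by (simp add: sum.swap[of _ A] sum_divide_distrib)

lemma const_term_cmult: "const_term n M (\<lambda>x. c * F x) = c * const_term n M F"
  unfolding const_term_def by (simp add: sum_distrib_left)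

lemma sum_roots_of_unity_powi:
  assumes M: "M > 0" and e: "\<bar>e\<bar> < int M"
  shows "(\<Sum>j<M. (cis (2 * pi / real M) ^ j) powi e) = (if e = 0 then of_nat M else 0)"
proof (cases "e = 0")
  case False
  define z where "z = cis (2 * pi * real_of_int e / real M)"
  have "z ^ M = cis (2 * pi * real_of_int e)" using M by (simp add: z_def DeMoivre)
  hence z_M: "z ^ M = 1" by simp
  have "z \<noteq> 1"
  proof
    assume "z = 1"
    hence "cos (2 * pi * real_of_int e / real M) = 1"
      by (metis cis.sel(1) one_complex.sel(1) z_def)
    then obtain m :: int where "2 * pi * real_of_int e / real M = real_of_int m * 2 * pi"
      using cos_one_2pi_int by blast
    hence "e = m * int M" using M by (simp add: field_simps) (metis of_int_eq_iff of_int_mult of_int_of_nat_eq)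
    with e False show False
      by (cases "m = 0") (auto simp: abs_mult mult_le_cancel_right1 dest: order.trans[rotated])
  qed
  have "(\<Sum>j<M. (cis (2 * pi / real M) ^ j) powi e) = (\<Sum>j<M. z ^ j)"
    by (simp add: z_def DeMoivre cis_power_int algebra_simps)
  also have "\<dots> = 0" using \<open>z \<noteq> 1\<close> z_M by (simp add: sum_gp_strict)
  finally show ?thesis using False by simp
qed simp

lemma const_term_monomial:
  assumes M: "M > 0" and e: "\<And>i. i < n \<Longrightarrow> \<bar>e i\<bar> < int M"
  shows "const_term n M (\<lambda>x. perm_monomial n x e id) = (if \<forall>i<n. e i = 0 then 1 else 0)"
proof -
  let ?\<zeta> = "cis (2 * pi / real M)"
  have "(\<Sum>k\<in>PiE {..<n} (\<lambda>_. {..<M}). perm_monomial n (sample_point M k) e id) =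
        (\<Prod>i<n. \<Sum>j<M. (of_nat (Suc i) * ?\<zeta> ^ j) powi e i)"
    unfolding perm_monomial_def sample_point_def id_apply by (rule prod_sum_PiE[symmetric]) auto
  also have "\<dots> = (\<Prod>i<n. of_nat (Suc i) powi e i * (if e i = 0 then of_nat M else 0))"
    using sum_roots_of_unity_powi[OF M e]
    by (intro prod.cong refl) (simp add: power_int_mult_distrib flip: sum_distrib_left)
  also have "\<dots> = (if \<forall>i<n. e i = 0 then of_nat M ^ n else 0)"
    by auto
  finally show ?thesis using M by (simp add: const_term_def)
qed

lemma const_term_perm_monomial:
  assumes w: "w permutes {..<n}" and M: "M > 0" and e: "\<And>i. i < n \<Longrightarrow> \<bar>e i\<bar> < int M"
  shows "const_term n M (\<lambda>x. perm_monomial n x e w) = (if \<forall>i<n. e i = 0 then 1 else 0)"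
proof -
  have inv_w: "inv_into UNIV w permutes {..<n}" by (rule permutes_inv[OF w])
  have "const_term n M (\<lambda>x. perm_monomial n x e w) = const_term n M (\<lambda>x. perm_monomial n x (e \<circ> inv_into UNIV w) id)"
    by (simp add: perm_monomial_reindex_id[OF w])
  also have "\<dots> = (if \<forall>k<n. e (inv_into UNIV w k) = 0 then 1 else 0)"
    using permutes_in_image[OF inv_w] by (subst const_term_monomial[OF M]) (auto intro: e)
  also have "(\<forall>k<n. e (inv_into UNIV w k) = 0) \<longleftrightarrow> (\<forall>i<n. e i = 0)"
    using permutes_in_image[OF inv_w] permutes_in_image[OF w] permutes_inverses(2)[OF w]
    by (metis lessThan_iff)
  finally show ?thesis .
qed

definition cancel_sign_sum :: "nat \<Rightarrow> (nat \<Rightarrow> int) \<Rightarrow> (nat \<Rightarrow> int) \<Rightarrow> int" where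
  "cancel_sign_sum n b c =
     (\<Sum>u | u permutes {..<n}. if \<forall>i<n. b i + c (u i) = 0 then sign u else 0)"

lemma sum_cancel_sign_compose:
  assumes w: "w permutes {..<n}"
  shows "(\<Sum>v | v permutes {..<n}. if \<forall>i<n. b i + c (inv_into UNIV v (w i)) = 0 then sign v else 0)
       = sign w * cancel_sign_sum n b c"
proof -
  let ?P = "{v. v permutes {..<n}}"
  define f where "f v = (if \<forall>i<n. b i + c (inv_into UNIV v (w i)) = 0 then sign v else 0)" for v
  have inv_w: "inv_into UNIV w permutes {..<n}" by (rule permutes_inv[OF w])
  have "sum f ?P = (\<Sum>v\<in>?P. f (inv_into UNIV v))" by (rule sum_permutations_inverse)
  also have "\<dots> = (\<Sum>v\<in>?P. f (inv_into UNIV (v \<circ> inv_into UNIV w)))"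
    by (rule sum_permutations_compose_right[OF inv_w])
  also have "\<dots> = (\<Sum>v\<in>?P. sign w * (if \<forall>i<n. b i + c (v i) = 0 then sign v else 0))"
  proof (rule sum.cong[OF refl])
    fix v assume "v \<in> ?P"
    hence vw: "v \<circ> inv_into UNIV w permutes {..<n}" by (simp add: permutes_compose[OF inv_w])
    have "permutation v" "permutation (inv_into UNIV w)" "permutation w" "permutation (v \<circ> inv_into UNIV w)"
      using \<open>v \<in> ?P\<close> inv_w w vw permutation_permutes by blast+
    hence "sign (inv_into UNIV (v \<circ> inv_into UNIV w)) = sign v * sign w"
      by (simp add: sign_inverse sign_compose)
    moreover have "(v \<circ> inv_into UNIV w) (w i) = v i" for i
      using permutes_inverses(2)[OF w] by simp
    ultimately show "f (inv_into UNIV (v \<circ> inv_into UNIV w)) =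
        sign w * (if \<forall>i<n. b i + c (v i) = 0 then sign v else 0)"
      by (simp add: f_def permutes_inv_inv[OF vw] mult.commute)
  qed
  also have "\<dots> = sign w * cancel_sign_sum n b c" by (simp add: cancel_sign_sum_def sum_distrib_left)
  finally show ?thesis by (simp add: f_def)
qed

lemma const_term_alternant_mult:
  assumes M: "M > 0"
    and b: "\<And>i. i < n \<Longrightarrow> 2 * \<bar>b i\<bar> < int M" and c: "\<And>i. i < n \<Longrightarrow> 2 * \<bar>c i\<bar> < int M"
  shows "const_term n M (\<lambda>x. alternant n b x * alternant n c x) =
         of_nat (fact n) * of_int (cancel_sign_sum n b c)"
proof -
  let ?P = "{v. v permutes {..<n}}"
  let ?e = "\<lambda>w v i. b i + c (inv_into UNIV v (w i))"
  have "const_term n M (\<lambda>x. alternant n b x * alternant n c x) = const_term n M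
      (\<lambda>x. \<Sum>w\<in>?P. \<Sum>v\<in>?P. of_int (sign w * sign v) * perm_monomial n x (?e w v) w)"
  proof (rule const_term_cong)
    fix x assume "good_point n x"
    thus "alternant n b x * alternant n c x =
        (\<Sum>w\<in>?P. \<Sum>v\<in>?P. of_int (sign w * sign v) * perm_monomial n x (?e w v) w)"
      unfolding alternant_def sum_product
      by (intro sum.cong refl)
         (simp add: good_point_nonzero perm_monomial_mult[symmetric] algebra_simps)
  qed
  also have "\<dots> = (\<Sum>w\<in>?P. \<Sum>v\<in>?P. if \<forall>i<n. ?e w v i = 0 then of_int (sign w * sign v) else 0)"
  proof -
    have "const_term n M (\<lambda>x. perm_monomial n x (?e w v) w) = (if \<forall>i<n. ?e w v i = 0 then 1 else 0)"
      if w: "w permutes {..<n}" and v: "v permutes {..<n}" for w v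
    proof (rule const_term_perm_monomial[OF w M])
      fix i assume i: "i < n"
      have "inv_into UNIV v (w i) < n"
        using permutes_in_image[OF permutes_inv[OF v]] permutes_in_image[OF w] i by simp
      thus "\<bar>?e w v i\<bar> < int M" using b[OF i] c by force
    qed
    thus ?thesis
      by (simp add: const_term_sum finite_permutations const_term_cmult) (auto intro!: sum.cong)
  qed
  also have "\<dots> = (\<Sum>w\<in>?P. of_int (sign w * (\<Sum>v\<in>?P. if \<forall>i<n. ?e w v i = 0 then sign v else 0)))"
    by (auto simp: sum_distrib_left intro!: sum.cong)
  also have "\<dots> = (\<Sum>w\<in>?P. of_int (sign w * (sign w * cancel_sign_sum n b c)))"
    by (intro sum.cong refl) (simp add: sum_cancel_sign_compose)
  also have "\<dots> = of_nat (fact n) * of_int (cancel_sign_sum n b c)"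
    by (simp add: mult.assoc[symmetric] card_permutations)
  finally show ?thesis .
qed

definition reversal :: "nat \<Rightarrow> nat \<Rightarrow> nat" where
  "reversal n i = (if i < n then n - 1 - i else i)"

lemma reversal_reversal [simp]: "reversal n (reversal n i) = i"
  by (simp add: reversal_def)

lemma reversal_permutes: "reversal n permutes {..<n}"
  unfolding permutes_def
proof (intro conjI allI impI)
  show "\<exists>!i. reversal n i = j" for j
    by (rule ex1I[of _ "reversal n j"]) (simp, metis reversal_reversal)
qed (simp add: reversal_def)

lemma permutes_strict_mono_on_eq_id:
  fixes q :: "nat \<Rightarrow> nat"
  assumes q: "q permutes {..<n}" and mono: "strict_mono_on {..<n} q"
  shows "q = id"
proof (rule permutes_natset_ge[OF q])
  have "i < n \<longrightarrow> i \<le> q i" for i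
  proof (induction i)
    case (Suc i)
    show ?case
    proof
      assume "Suc i < n"
      hence "q i < q (Suc i)" using mono by (simp add: monotone_on_def)
      thus "Suc i \<le> q (Suc i)" using Suc \<open>Suc i < n\<close> by simp
    qed
  qed simp
  thus "\<forall>i\<in>{..<n}. i \<le> q i" by simp
qed

lemma cancel_sign_sum_strict_antimono:
  assumes b: "strict_antimono_on {..<n} b" and c: "strict_antimono_on {..<n} c"
  shows "cancel_sign_sum n b c = (if \<forall>i<n. b i + c (reversal n i) = 0 then sign (reversal n) else 0)"
proof -
  let ?P = "{u. u permutes {..<n}}"
  define f where "f u = (if \<forall>i<n. b i + c (u i) = 0 then sign u else 0)" for u
  have unique: "u = reversal n" if u: "u permutes {..<n}" and cancel: "\<forall>i<n. b i + c (u i) = 0" for u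
  proof -
    have decreasing: "u j < u i" if ij: "i < j" "j < n" for i j
    proof (rule ccontr)
      assume "\<not> u j < u i"
      moreover have "u i \<noteq> u j" using permutes_inj[OF u] ij by (auto simp: inj_def)
      moreover have "u i < n" "u j < n" using permutes_in_image[OF u] ij by auto
      ultimately have "c (u j) < c (u i)" using c by (auto simp: monotone_on_def)
      moreover have "b j < b i" using b ij by (auto simp: monotone_on_def)
      moreover have "b i + c (u i) = 0" "b j + c (u j) = 0" using cancel ij by auto
      ultimately show False by linarith
    qed
    have "strict_mono_on {..<n} (reversal n \<circ> u)"
    proof (rule monotone_onI)
      fix i j assume "i \<in> {..<n}" "j \<in> {..<n}" "i < j"
      hence "u j < u i" "u i < n" using decreasing permutes_in_image[OF u] by auto
      thus "(reversal n \<circ> u) i < (reversal n \<circ> u) j" by (simp add: reversal_def)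
    qed
    hence "reversal n \<circ> u = id"
      by (rule permutes_strict_mono_on_eq_id[OF permutes_compose[OF u reversal_permutes]])
    thus ?thesis by (metis comp_apply id_apply reversal_reversal ext)
  qed
  have "cancel_sign_sum n b c = f (reversal n) + sum f (?P - {reversal n})"
    unfolding cancel_sign_sum_def f_def[symmetric]
    by (rule sum.remove) (auto simp: finite_permutations reversal_permutes)
  also have "sum f (?P - {reversal n}) = 0"
    by (rule sum.neutral) (auto simp: f_def dest: unique)
  finally show ?thesis by (simp add: f_def)
qed

section \<open>The coefficient of the trivial Schur polynomial\<close>

lemma const_term_alternant_mult_strict_antimono:
  assumes "M > 0" "strict_antimono_on {..<n} b" "strict_antimono_on {..<n} c"
    and "\<And>i. i < n \<Longrightarrow> 2 * \<bar>b i\<bar> < int M" "\<And>i. i < n \<Longrightarrow> 2 * \<bar>c i\<bar> < int M"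
  shows "const_term n M (\<lambda>x. alternant n b x * alternant n c x) =
    (if \<forall>i<n. b i + c (reversal n i) = 0 then of_nat (fact n) * of_int (sign (reversal n)) else 0)"
  using assms by (simp add: const_term_alternant_mult cancel_sign_sum_strict_antimono)

lemma finite_set_of_exponents_bounded:
  fixes F :: "(nat \<Rightarrow> int) set"
  assumes "finite F"
  obtains M :: nat where "M > 0" "\<And>f i. f \<in> F \<Longrightarrow> i < n \<Longrightarrow> 2 * \<bar>f i\<bar> < int M"
proof
  define B where "B = (\<Sum>f\<in>F. \<Sum>i<n. \<bar>f i\<bar>)"
  show "nat (2 * B + 1) > 0" by (simp add: B_def sum_nonneg)
  fix f i assume "f \<in> F" "i < n"
  hence "\<bar>f i\<bar> \<le> B"
    unfolding B_def using assms
    by (intro order.trans[OF member_le_sum[of i] member_le_sum[of f]]) (auto intro: sum_nonneg)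
  thus "2 * \<bar>f i\<bar> < int (nat (2 * B + 1))" by simp
qed

lemma strict_decr_strict_antimono_on_nth:
  "strict_decr n xs \<Longrightarrow> strict_antimono_on {..<n} (\<lambda>i. xs ! i)"
  by (auto simp: strict_decr_def monotone_on_def sorted_wrt_iff_nth_less)

lemma strict_decr_two_rho: "strict_decr n (two_rho n)"
  by (auto simp: strict_decr_def two_rho_def sorted_wrt_iff_nth_less)

lemma strict_antimono_on_partition_shift:
  assumes "gen_partition n mu"
  shows "strict_antimono_on {..<n} (\<lambda>i. mu ! i + staircase n i)"
proof (rule monotone_onI)
  fix i j assume "i \<in> {..<n}" "j \<in> {..<n}" "i < j"
  moreover from this have "mu ! j \<le> mu ! i"
    using assms by (simp add: gen_partition_def sorted_wrt_iff_nth_less)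
  ultimately show "mu ! j + staircase n j < mu ! i + staircase n i"
    by (simp add: staircase_def)
qed

lemma alternant_neg_index:
  assumes "\<And>i. i < n \<Longrightarrow> x i \<noteq> 0"
  shows "alternant n (\<lambda>i. - int i) x = vandermonde n x * (\<Prod>k<n. x k powi (1 - int n))"
proof -
  have "alternant n (\<lambda>i. - int i) x = alternant n (\<lambda>i. staircase n i + (1 - int n)) x"
    by (simp add: staircase_def)
  thus ?thesis by (simp add: alternant_shift[OF assms] alternant_staircase)
qed

lemma alternant_two_rho:
  assumes "\<And>i. i < n \<Longrightarrow> x i \<noteq> 0"
  shows "alternant n (\<lambda>i. two_rho n ! i) x =
         pair_sum_prod n x * vandermonde n x * (\<Prod>k<n. x k powi (1 - int n))"
proof -
  have "alternant n (\<lambda>i. two_rho n ! i) x = alternant n (\<lambda>i. 2 * staircase n i + (1 - int n)) x"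
    by (rule alternant_cong) (simp add: two_rho_def staircase_def)
  thus ?thesis
    by (simp add: alternant_shift[OF assms] alternant_double alternant_staircase
                  pair_sum_prod_mult_vandermonde)
qed

lemma schur_P_mult_alternants:
  assumes x: "good_point n x"
  shows "schur_P n lam x * (vandermonde n x * alternant n (\<lambda>i. - int i) x) =
         alternant n (\<lambda>i. lam ! i) x * alternant n (\<lambda>i. two_rho n ! i) x"
  using vandermonde_nonzero[OF good_point_inj_on[OF x]]
  by (simp add: schur_P_eq_alternant[OF x] alternant_neg_index alternant_two_rho good_point_nonzero[OF x])

lemma nth_add_two_rho_reversal_eq_zero_iff:
  "length lam = n \<Longrightarrow> (\<forall>i<n. lam ! i + two_rho n ! reversal n i = 0) \<longleftrightarrow> lam = two_rho n"
  by (auto simp: list_eq_iff_nth_eq two_rho_def reversal_def)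

lemma nth_add_staircase_eq_reversal_iff:
  "length mu = n \<Longrightarrow> (\<forall>i<n. mu ! i + staircase n i = int (reversal n i)) \<longleftrightarrow> mu = replicate n 0"
  by (auto simp: list_eq_iff_nth_eq staircase_def reversal_def)

lemma const_term_alternant_mult_two_rho:
  assumes M: "M > 0" and lam: "strict_decr n lam"
    and "\<And>i. i < n \<Longrightarrow> 2 * \<bar>lam ! i\<bar> < int M" "\<And>i. i < n \<Longrightarrow> 2 * \<bar>two_rho n ! i\<bar> < int M"
  shows "const_term n M (\<lambda>x. alternant n (\<lambda>i. lam ! i) x * alternant n (\<lambda>i. two_rho n ! i) x) =
    (if lam = two_rho n then of_nat (fact n) * of_int (sign (reversal n)) else 0)"
proof -
  have "const_term n M (\<lambda>x. alternant n (\<lambda>i. lam ! i) x * alternant n (\<lambda>i. two_rho n ! i) x) =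
    (if \<forall>i<n. lam ! i + two_rho n ! reversal n i = 0 then of_nat (fact n) * of_int (sign (reversal n)) else 0)"
    by (rule const_term_alternant_mult_strict_antimono[OF M])
       (use assms in \<open>auto intro: strict_decr_strict_antimono_on_nth strict_decr_two_rho\<close>)
  thus ?thesis using lam by (simp add: nth_add_two_rho_reversal_eq_zero_iff strict_decr_def)
qed

lemma const_term_alternant_mult_neg_index:
  assumes M: "M > 0" and mu: "gen_partition n mu"
    and "\<And>i. i < n \<Longrightarrow> 2 * \<bar>mu ! i + staircase n i\<bar> < int M" "\<And>i. i < n \<Longrightarrow> 2 * \<bar>- int i\<bar> < int M"
  shows "const_term n M (\<lambda>x. alternant n (\<lambda>i. mu ! i + staircase n i) x * alternant n (\<lambda>i. - int i) x) =
    (if mu = replicate n 0 then of_nat (fact n) * of_int (sign (reversal n)) else 0)"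
proof -
  have "strict_antimono_on {..<n} (\<lambda>i. - int i)" by (simp add: monotone_on_def)
  thus ?thesis
    using mu assms(3,4)
    by (simp add: const_term_alternant_mult_strict_antimono[OF M] strict_antimono_on_partition_shift
        nth_add_staircase_eq_reversal_iff gen_partition_def)
qed

lemma schur_expansion_coeff_zero:
  assumes lam: "strict_decr n lam" and g: "is_schur_expansion n lam g"
  shows "g (replicate n 0) = (if lam = two_rho n then 1 else 0)"
proof -
  define S where "S = {mu. g mu \<noteq> 0}"
  have S: "finite S" "\<And>mu. mu \<in> S \<Longrightarrow> gen_partition n mu"
    and expansion: "\<And>x. good_point n x \<Longrightarrow> schur_P n lam x = (\<Sum>mu\<in>S. g mu * schur_s n mu x)"
    using g by (auto simp: is_schur_expansion_def S_def)
  define shifted where "shifted mu = (\<lambda>i. mu ! i + staircase n i)" for mu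
  let ?l = "\<lambda>i. lam ! i" and ?r = "\<lambda>i. two_rho n ! i" and ?c = "\<lambda>i. - int i"
  let ?sign = "of_nat (fact n) * of_int (sign (reversal n)) :: complex"
  obtain M where M: "M > 0" and bound:
    "\<And>f i. f \<in> {?l, ?r, ?c} \<union> shifted ` S \<Longrightarrow> i < n \<Longrightarrow> 2 * \<bar>f i\<bar> < int M"
    using finite_set_of_exponents_bounded[of "{?l, ?r, ?c} \<union> shifted ` S"] S(1) by blast
  have "(if lam = two_rho n then ?sign else 0) = const_term n M (\<lambda>x. alternant n ?l x * alternant n ?r x)"
    using bound by (intro const_term_alternant_mult_two_rho[OF M lam, symmetric]) auto
  also have "\<dots> = const_term n M (\<lambda>x. \<Sum>mu\<in>S. g mu * (alternant n (shifted mu) x * alternant n ?c x))"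
  proof (rule const_term_cong)
    fix x assume x: "good_point n x"
    have "vandermonde n x \<noteq> 0" by (rule vandermonde_nonzero[OF good_point_inj_on[OF x]])
    thus "alternant n ?l x * alternant n ?r x = (\<Sum>mu\<in>S. g mu * (alternant n (shifted mu) x * alternant n ?c x))"
      by (simp add: schur_P_mult_alternants[OF x, symmetric] expansion[OF x] schur_s_eq_alternant[OF x]
                    shifted_def sum_distrib_right)
  qed
  also have "\<dots> = (\<Sum>mu\<in>S. g mu * (if mu = replicate n 0 then ?sign else 0))"
  proof -
    have "const_term n M (\<lambda>x. alternant n (shifted mu) x * alternant n ?c x) =
          (if mu = replicate n 0 then ?sign else 0)" if "mu \<in> S" for mu
      unfolding shifted_def using that bound[of "shifted mu"] bound[of ?c]
      by (intro const_term_alternant_mult_neg_index[OF M S(2)]) (auto simp: shifted_def)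
    thus ?thesis by (simp add: const_term_sum[OF S(1)] const_term_cmult)
  qed
  also have "\<dots> = (\<Sum>mu\<in>S. if mu = replicate n 0 then g mu * ?sign else 0)"
    by (rule sum.cong) auto
  also have "\<dots> = g (replicate n 0) * ?sign"
    unfolding sum.delta[OF S(1)] by (simp add: S_def)
  finally show ?thesis by (cases "lam = two_rho n") simp_all
qed

section \<open>Existence of the expansion\<close>

definition index_pairs :: "nat \<Rightarrow> (nat \<times> nat) set" where
  "index_pairs n = (SIGMA i:{..<n}. {i<..<n})"

text \<open>Choosing, for each pair i < j in T, the factor x i of x i + x j, and x j for the pairs
  not in T, gives the monomial with exponents pair_degree n T.\<close>

definition pair_degree :: "nat \<Rightarrow> (nat \<times> nat) set \<Rightarrow> nat \<Rightarrow> nat" where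
  "pair_degree n T k = card {p\<in>T. fst p = k} + card {p\<in>index_pairs n - T. snd p = k}"

lemma prod_comp_eq_prod_power_card:
  fixes y :: "nat \<Rightarrow> 'a::comm_monoid_mult"
  assumes "finite A" "f ` A \<subseteq> {..<n}"
  shows "(\<Prod>p\<in>A. y (f p)) = (\<Prod>k<n. y k ^ card {p\<in>A. f p = k})"
proof -
  have "(\<Prod>p\<in>A. y (f p)) = (\<Prod>k<n. \<Prod>p\<in>{p. p \<in> A \<and> f p = k}. y (f p))"
    by (rule prod.group[symmetric]) (use assms in auto)
  also have "\<dots> = (\<Prod>k<n. \<Prod>p\<in>{p. p \<in> A \<and> f p = k}. y k)"
    by (intro prod.cong refl) auto
  finally show ?thesis by simp
qed

lemma pair_sum_prod_expand:
  "pair_sum_prod n y = (\<Sum>T\<in>Pow (index_pairs n). \<Prod>k<n. y k ^ pair_degree n T k)"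
proof -
  have finite: "finite (index_pairs n)" by (simp add: index_pairs_def)
  have "pair_sum_prod n y = (\<Prod>p\<in>index_pairs n. y (fst p) + y (snd p))"
    unfolding pair_sum_prod_def index_pairs_def by (subst prod.Sigma) (auto simp: case_prod_beta)
  also have "\<dots> = (\<Sum>T\<in>Pow (index_pairs n). (\<Prod>p\<in>T. y (fst p)) * (\<Prod>p\<in>index_pairs n - T. y (snd p)))"
    by (rule prod_add[OF finite])
  also have "\<dots> = (\<Sum>T\<in>Pow (index_pairs n). \<Prod>k<n. y k ^ pair_degree n T k)"
  proof (rule sum.cong[OF refl])
    fix T assume "T \<in> Pow (index_pairs n)"
    hence T: "T \<subseteq> index_pairs n" "finite T" using finite finite_subset by auto
    have "(\<Prod>p\<in>T. y (fst p)) = (\<Prod>k<n. y k ^ card {p\<in>T. fst p = k})"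
      by (rule prod_comp_eq_prod_power_card) (use T in \<open>auto simp: index_pairs_def\<close>)
    moreover have "(\<Prod>p\<in>index_pairs n - T. y (snd p)) =
        (\<Prod>k<n. y k ^ card {p\<in>index_pairs n - T. snd p = k})"
      by (rule prod_comp_eq_prod_power_card) (auto simp: index_pairs_def)
    ultimately show "(\<Prod>p\<in>T. y (fst p)) * (\<Prod>p\<in>index_pairs n - T. y (snd p)) =
        (\<Prod>k<n. y k ^ pair_degree n T k)"
      by (simp add: pair_degree_def power_add prod.distrib)
  qed
  finally show ?thesis .
qed

text \<open>pair_sum_prod is symmetric, so in each term of the alternant it can be expanded in the
  permuted variables.\<close>

lemma pair_sum_prod_mult_alternant:
  fixes x :: "nat \<Rightarrow> 'a::field"
  assumes nonzero: "\<And>i. i < n \<Longrightarrow> x i \<noteq> 0" and inj: "inj_on x {..<n}"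
  shows "pair_sum_prod n x * alternant n b x =
         (\<Sum>T\<in>Pow (index_pairs n). alternant n (\<lambda>i. b i + int (pair_degree n T i)) x)"
proof -
  have "perm_monomial n x b w * pair_sum_prod n x =
        (\<Sum>T\<in>Pow (index_pairs n). perm_monomial n x (\<lambda>i. b i + int (pair_degree n T i)) w)"
    if w: "w permutes {..<n}" for w
  proof -
    have "pair_sum_prod n x = (\<Sum>T\<in>Pow (index_pairs n). \<Prod>k<n. x (w k) ^ pair_degree n T k)"
      using pair_sum_prod_permute[OF inj w] pair_sum_prod_expand[of n "x \<circ> w"] by simp
    thus ?thesis
      using permutes_in_image[OF w] nonzero
      by (simp add: sum_distrib_left perm_monomial_def prod.distrib power_int_add)
  qed
  hence "pair_sum_prod n x * alternant n b x = (\<Sum>w | w permutes {..<n}.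
      \<Sum>T\<in>Pow (index_pairs n). of_int (sign w) * perm_monomial n x (\<lambda>i. b i + int (pair_degree n T i)) w)"
    by (simp add: alternant_def sum_distrib_left mult.left_commute mult.commute[of _ "pair_sum_prod n x"])
  also have "\<dots> = (\<Sum>T\<in>Pow (index_pairs n). alternant n (\<lambda>i. b i + int (pair_degree n T i)) x)"
    unfolding alternant_def by (rule sum.swap)
  finally show ?thesis .
qed

lemma exists_permutation_antimono_on:
  fixes b :: "nat \<Rightarrow> 'a::linorder"
  obtains s where "s permutes {..<n}" "antimono_on {..<n} (b \<circ> s)"
proof -
  define xs where "xs = map b [0..<n]"
  have "mset (rev (sort xs)) = mset xs" by simp
  then obtain p where p: "p permutes {..<length xs}" "permute_list p xs = rev (sort xs)"
    by (rule mset_eq_permutation)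
  have length: "length xs = n" by (simp add: xs_def)
  have nth: "rev (sort xs) ! i = b (p i)" if "i < n" for i
    using p permutes_in_image[OF p(1)] that length
    by (metis xs_def add_0 length_map nth_map nth_upt permute_list_nth lessThan_iff)
  have "sorted_wrt (\<ge>) (rev (sort xs))" by (simp add: sorted_wrt_rev)
  hence "antimono_on {..<n} (b \<circ> p)"
    using nth length by (auto simp: monotone_on_def sorted_wrt_iff_nth_less le_less)
  thus ?thesis using that p length by simp
qed

lemma alternant_repeated_exponent:
  fixes x :: "nat \<Rightarrow> 'a::field_char_0"
  assumes "i < n" "j < n" "i \<noteq> j" "b i = b j"
  shows "alternant n b x = 0"
proof -
  let ?t = "Transposition.transpose i j"
  have t: "?t permutes {..<n}" using assms by (intro permutes_swap_id) auto
  have "b \<circ> ?t = b"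
    using assms(4) by (auto simp: fun_eq_iff transpose_def)
  hence "alternant n b x = - alternant n b x"
    using alternant_permute_exponents[OF t, of b x] assms(3) by (simp add: sign_swap_id)
  thus ?thesis by simp
qed

text \<open>Sorting the exponents produces either a repeated exponent, which kills the alternant, or a
  strictly decreasing sequence, that is, a generalized partition shifted by the staircase.\<close>

lemma alternant_straighten:
  fixes b :: "nat \<Rightarrow> int"
  obtains e :: int and mu where "gen_partition n mu"
    "\<And>x :: nat \<Rightarrow> 'a::field_char_0. alternant n b x = of_int e * alternant n (\<lambda>i. mu ! i + staircase n i) x"
proof -
  obtain s where s: "s permutes {..<n}" and antimono: "antimono_on {..<n} (b \<circ> s)"
    by (rule exists_permutation_antimono_on)
  define c where "c = b \<circ> s"
  have alternant_b: "alternant n b x = of_int (sign s) * alternant n c x" for x :: "nat \<Rightarrow> 'a"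
    using alternant_permute_exponents[OF s, of b x]
    by (simp add: c_def flip: of_int_mult)
  show ?thesis
  proof (cases "\<forall>k. Suc k < n \<longrightarrow> c (Suc k) < c k")
    case True
    define mu where "mu = map (\<lambda>i. c i - staircase n i) [0..<n]"
    have "gen_partition n mu"
      unfolding gen_partition_def sorted_wrt_iff_nth_Suc_transp[OF transp_on_ge]
      using True by (auto simp: mu_def staircase_def nth_append)
    moreover have "alternant n c x = alternant n (\<lambda>i. mu ! i + staircase n i) x" for x :: "nat \<Rightarrow> 'a"
      by (rule alternant_cong) (simp add: mu_def)
    ultimately show ?thesis using that alternant_b by metis
  next
    case False
    then obtain k where k: "Suc k < n" "\<not> c (Suc k) < c k" by blast
    moreover have "c (Suc k) \<le> c k" using antimono k(1) by (simp add: monotone_on_def c_def)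
    ultimately have "c (Suc k) = c k" by simp
    have "alternant n c x = 0" for x :: "nat \<Rightarrow> 'a"
      using k(1) \<open>c (Suc k) = c k\<close> by (intro alternant_repeated_exponent[of "Suc k" n k]) auto
    hence "alternant n b x = of_int 0 * alternant n (\<lambda>i. replicate n 0 ! i + staircase n i) x"
      for x :: "nat \<Rightarrow> 'a"
      by (simp add: alternant_b)
    moreover have "gen_partition n (replicate n 0)"
      by (simp add: gen_partition_def sorted_wrt_iff_nth_less)
    ultimately show ?thesis using that by blast
  qed
qed

lemma alternant_straighten_family:
  fixes b :: "'t \<Rightarrow> nat \<Rightarrow> int"
  obtains U e where "\<And>T. gen_partition n (U T)"
    "\<And>T x. alternant n (b T) x = of_int (e T) * alternant n (\<lambda>i. U T ! i + staircase n i) (x :: nat \<Rightarrow> complex)"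
proof -
  have "\<forall>T. \<exists>p. gen_partition n (snd p) \<and> (\<forall>x :: nat \<Rightarrow> complex.
      alternant n (b T) x = of_int (fst p) * alternant n (\<lambda>i. snd p ! i + staircase n i) x)"
  proof
    fix T
    show "\<exists>p. gen_partition n (snd p) \<and> (\<forall>x :: nat \<Rightarrow> complex.
        alternant n (b T) x = of_int (fst p) * alternant n (\<lambda>i. snd p ! i + staircase n i) x)"
      by (rule alternant_straighten[where b="b T" and n=n]) auto
  qed
  then obtain f where "\<forall>T. gen_partition n (snd (f T)) \<and> (\<forall>x :: nat \<Rightarrow> complex.
      alternant n (b T) x = of_int (fst (f T)) * alternant n (\<lambda>i. snd (f T) ! i + staircase n i) x)"
    by (rule exE[OF choice])
  thus ?thesis using that[of "snd \<circ> f" "fst \<circ> f"] by simp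
qed

lemma schur_expansion_of_alternant_sum:
  fixes b :: "'t \<Rightarrow> nat \<Rightarrow> int"
  assumes A: "finite A"
  obtains g where "finite {mu. g mu \<noteq> 0}" "\<And>mu. g mu \<noteq> 0 \<Longrightarrow> gen_partition n mu"
    "\<And>x. good_point n x \<Longrightarrow>
       (\<Sum>T\<in>A. alternant n (b T) x) / vandermonde n x = (\<Sum>mu | g mu \<noteq> 0. g mu * schur_s n mu x)"
proof -
  obtain e U where U: "\<And>T. gen_partition n (U T)"
    and straighten: "\<And>T x. alternant n (b T) x =
      of_int (e T) * alternant n (\<lambda>i. U T ! i + staircase n i) (x :: nat \<Rightarrow> complex)"
    using alternant_straighten_family[where b=b and n=n] by metis
  define g where "g mu = (\<Sum>T\<in>{T\<in>A. U T = mu}. of_int (e T) :: complex)" for mu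
  have support: "{mu. g mu \<noteq> 0} \<subseteq> U ` A"
  proof
    fix mu assume "mu \<in> {mu. g mu \<noteq> 0}"
    hence "(\<Sum>T\<in>{T\<in>A. U T = mu}. of_int (e T) :: complex) \<noteq> 0" by (simp add: g_def)
    then obtain T where "T \<in> {T\<in>A. U T = mu}" by (rule sum.not_neutral_contains_not_neutral)
    thus "mu \<in> U ` A" by auto
  qed
  show ?thesis
  proof
    show "finite {mu. g mu \<noteq> 0}" by (rule finite_subset[OF support]) (simp add: A)
    show "gen_partition n mu" if "g mu \<noteq> 0" for mu using support that U by auto
    fix x assume x: "good_point n x"
    have "(\<Sum>T\<in>A. alternant n (b T) x) / vandermonde n x = (\<Sum>T\<in>A. of_int (e T) * schur_s n (U T) x)"
      unfolding sum_divide_distrib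
      by (rule sum.cong[OF refl]) (simp only: straighten schur_s_eq_alternant[OF x] times_divide_eq_right)
    also have "\<dots> = (\<Sum>mu\<in>U ` A. g mu * schur_s n mu x)"
      unfolding sum.image_gen[OF A, of _ U] g_def sum_distrib_right
      by (rule sum.cong[OF refl], rule sum.cong) auto
    also have "\<dots> = (\<Sum>mu | g mu \<noteq> 0. g mu * schur_s n mu x)"
      by (intro sum.mono_neutral_right finite_imageI A support) simp
    finally show "(\<Sum>T\<in>A. alternant n (b T) x) / vandermonde n x =
        (\<Sum>mu | g mu \<noteq> 0. g mu * schur_s n mu x)" .
  qed
qed

lemma schur_expansion_exists: "\<exists>g. is_schur_expansion n lam g"
proof -
  let ?b = "\<lambda>T i. lam ! i + int (pair_degree n T i)"
  obtain g where g: "finite {mu. g mu \<noteq> 0}" "\<And>mu. g mu \<noteq> 0 \<Longrightarrow> gen_partition n mu"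
    "\<And>x. good_point n x \<Longrightarrow> (\<Sum>T\<in>Pow (index_pairs n). alternant n (?b T) x) / vandermonde n x =
        (\<Sum>mu | g mu \<noteq> 0. g mu * schur_s n mu x)"
    by (rule schur_expansion_of_alternant_sum[where A="Pow (index_pairs n)" and b="?b" and n=n])
       (auto simp: index_pairs_def)
  have "schur_P n lam x = (\<Sum>mu | g mu \<noteq> 0. g mu * schur_s n mu x)" if x: "good_point n x" for x
  proof -
    have "schur_P n lam x = pair_sum_prod n x * alternant n (\<lambda>i. lam ! i) x / vandermonde n x"
      by (simp add: schur_P_eq_alternant[OF x])
    also have "\<dots> = (\<Sum>T\<in>Pow (index_pairs n). alternant n (?b T) x) / vandermonde n x"
      by (simp only: pair_sum_prod_mult_alternant[OF good_point_nonzero[OF x] good_point_inj_on[OF x]])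
    finally show ?thesis using g(3)[OF x] by simp
  qed
  with g(1,2) show ?thesis unfolding is_schur_expansion_def by blast
qed

theorem lemma3p6:
  fixes n :: nat and lam :: "int list"
  assumes "strict_decr n lam"
  shows "(\<exists>g. is_schur_expansion n lam g) \<and>
         (\<forall>g. is_schur_expansion n lam g \<longrightarrow>
              g (replicate n 0) = (if lam = two_rho n then 1 else 0))"
  using schur_expansion_exists schur_expansion_coeff_zero[OF assms] by blast

end
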